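(* Let $k$ and $s$ be positive integers with $s\mid k$. Then for every integer $t$ with $0\le t\le s-1$, $$c_{s}(t)=\sum_{j=0}^{k/s-1}\sigma_{k}^{(0)}(js+t;s).$$
   Context: For a positive integer $m$, $(q)_m=(1-q)\cdots(1-q^m)$, $(q)_0=1$. For integers $k\ge1$ and $1\le s\le k$, $\sigma^{(0)}_k(t;s)$ ($0\le t\le k-1$) is the coefficient of $q^t$ in the remainder of $(q)_{s-1}$ upon division by $1-q^k$. $c_s(t)=\sum_{1\le h\le s,\ \gcd(h,s)=1}e^{2\pi i ht/s}$ is the Ramanujan sum. *)

theory Defs
  imports Complex_Main "HOL-Computational_Algebra.Polynomial"
begin

definition qpoch :: "nat \<Rightarrow> complex poly" where
  "qpoch m = (\<Prod>i\<in>{1..m}. 1 - monom 1 i)"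

definition sigma0 :: "nat \<Rightarrow> nat \<Rightarrow> nat \<Rightarrow> complex" where
  "sigma0 k t s = coeff (qpoch (s - 1) mod (1 - monom 1 k)) t"

definition ramanujan_sum :: "nat \<Rightarrow> int \<Rightarrow> complex" where
  "ramanujan_sum s t = (\<Sum>h\<in>{h. 1 \<le> h \<and> h \<le> s \<and> coprime h s}.
      exp (2 * pi * \<i> * of_nat h * of_int t / of_nat s))"

end

(*
  Let R be the remainder of (q)_{s-1} modulo 1 - q^k. As s divides k, R agrees with (q)_{s-1}
  at every s-th root of unity, and (q)_{s-1}(w^l) = prod_{0<i<s} (1 - w^{li}) equals s when w^l is
  primitive and 0 otherwise (for primitive w^l the product is the value at 1 of
  (q^s - 1)/(q - 1)). The roots of unity filter extracts the coefficients of R in the residue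
  class t mod s as an average of R over the s-th roots of unity, so the sum in question is the
  sum of the t-th powers of the primitive s-th roots of unity, which is c_s(t).
*)

theory Submission
  imports Defs "HOL-Analysis.Complex_Transcendental"
begin

definition primitive_root_unity :: "nat \<Rightarrow> 'a::monoid_mult \<Rightarrow> bool" where
  "primitive_root_unity s w \<longleftrightarrow> 0 < s \<and> (\<forall>m. w ^ m = 1 \<longleftrightarrow> s dvd m)"

lemma primitive_root_unity_exp:
  assumes "0 < s"
  shows "primitive_root_unity s (exp (2 * of_real pi * \<i> / of_nat s))"
proof -
  have "exp (2 * of_real pi * \<i> / of_nat s) ^ m = exp (2 * of_real pi * \<i> * of_nat m / of_nat s)" for m
    by (simp flip: exp_of_nat_mult add: field_simps)
  then show ?thesis
    using assms by (simp add: primitive_root_unity_def complex_root_unity_eq_1)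
qed

lemma primitive_root_unity_inverse:
  fixes w :: "'a::field"
  assumes "primitive_root_unity s w"
  shows "primitive_root_unity s (inverse w)"
  using assms by (simp add: primitive_root_unity_def power_inverse)

lemma primitive_root_unity_power:
  assumes "primitive_root_unity s w" and "coprime l s"
  shows "primitive_root_unity s (w ^ l)"
  using assms by (simp add: primitive_root_unity_def flip: power_mult)
    (metis coprime_commute coprime_dvd_mult_right_iff)

lemma primitive_root_unity_nonzero:
  fixes w :: "'a::semiring_1"
  assumes "primitive_root_unity s w"
  shows "w \<noteq> 0"
proof -
  have "w ^ s = 1" and "0 < s"
    using assms by (auto simp: primitive_root_unity_def)
  then show ?thesis
    by (metis zero_power zero_neq_one)
qed

lemma primitive_root_unity_power_eq_iff:
  fixes w :: "'a::idom"
  assumes "primitive_root_unity s w"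
  shows "w ^ i = w ^ j \<longleftrightarrow> i mod s = j mod s"
proof -
  have "w ^ i = w ^ j \<longleftrightarrow> i mod s = j mod s" if "i \<le> j" for i j
  proof -
    have "w \<noteq> 0"
      using primitive_root_unity_nonzero[OF assms] .
    moreover have "w ^ j = w ^ i * w ^ (j - i)"
      using that by (simp flip: power_add)
    ultimately have "w ^ i = w ^ j \<longleftrightarrow> w ^ (j - i) = 1"
      by auto
    also have "\<dots> \<longleftrightarrow> i mod s = j mod s"
      using assms mod_eq_dvd_iff_nat[OF that] by (simp add: primitive_root_unity_def) metis
    finally show ?thesis .
  qed
  from this[of i j] this[of j i] show ?thesis
    by (cases "i \<le> j") auto
qed

lemma sum_lessThan_powers_root_unity:
  fixes z :: "'a::idom"
  assumes "z ^ s = 1"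
  shows "(\<Sum>l<s. z ^ l) = (if z = 1 then of_nat s else 0)"
proof -
  have "(z - 1) * (\<Sum>l<s. z ^ l) = 0"
    using assms by (metis power_diff_1_eq diff_self)
  then show ?thesis
    by auto
qed

lemma sum_atLeast1_atMost_powers_root_unity:
  fixes z :: "'a::idom"
  assumes "z ^ s = 1"
  shows "(\<Sum>l=1..s. z ^ l) = (if z = 1 then of_nat s else 0)"
proof -
  have "(\<Sum>l=1..s. z ^ l) = z * (\<Sum>l<s. z ^ l)"
    by (simp add: sum.atLeast1_atMost_eq sum_distrib_left)
  then show ?thesis
    using sum_lessThan_powers_root_unity[OF assms] by simp
qed

lemma inverse_power_diff_root_unity:
  fixes z :: "'a::field"
  assumes "z ^ s = 1" and "u \<le> s"
  shows "inverse z ^ (s - u) = z ^ u"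
proof -
  have "z ^ (s - u) * z ^ u = 1"
    using assms by (simp flip: power_add)
  then show ?thesis
    by (simp add: power_inverse inverse_unique)
qed

lemma prod_one_minus_primitive_root_powers:
  fixes w :: "'a::idom"
  assumes w: "primitive_root_unity s w"
  shows "(\<Prod>i\<in>{1..<s}. 1 - w ^ i) = of_nat s"
proof -
  have s: "0 < s"
    using w by (simp add: primitive_root_unity_def)
  define G where "G = (\<Sum>j<s. monom (1::'a) j)"
  define Q where "Q = (\<Prod>i\<in>{1..<s}. [:- (w ^ i), 1:])"
  define A where "A = (\<lambda>i. w ^ i) ` {1..<s}"
  have degree_Q: "degree Q = s - 1"
    by (simp add: Q_def degree_prod_sum_eq)
  have "lead_coeff Q = 1"
    by (simp add: Q_def lead_coeff_prod)
  have "G = Q"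
  proof (rule poly_eqI_degree_lead_coeff[where n = "s - 1" and A = A])
    show "coeff G (s - 1) = coeff Q (s - 1)"
      using s \<open>lead_coeff Q = 1\<close> by (simp add: G_def coeff_sum coeff_monom degree_Q)
    have "inj_on (\<lambda>i. w ^ i) {1..<s}"
      by (rule inj_onI) (simp add: primitive_root_unity_power_eq_iff[OF w])
    then show "s - 1 \<le> card A"
      by (simp add: A_def card_image)
    show "degree G \<le> s - 1"
      unfolding G_def by (intro degree_sum_le) (auto intro: order.trans[OF degree_monom_le])
    show "degree Q \<le> s - 1"
      by (simp add: degree_Q)
    fix z assume "z \<in> A"
    then obtain i where i: "i \<in> {1..<s}" "z = w ^ i"
      by (auto simp: A_def)
    then have "z ^ s = 1" and "z \<noteq> 1"
      using w by (auto simp: primitive_root_unity_def simp flip: power_mult dest: dvd_imp_le)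
    then have "poly G z = 0"
      using sum_lessThan_powers_root_unity[of z s] by (simp add: G_def poly_sum poly_monom)
    moreover have "poly Q z = 0"
      using i by (auto simp: Q_def poly_prod)
    ultimately show "poly G z = poly Q z"
      by simp
  qed
  then have "poly G 1 = poly Q 1"
    by simp
  then show ?thesis
    by (simp add: G_def Q_def poly_sum poly_monom poly_prod)
qed

text \<open>The twist \<open>(w ^ l) ^ (s - r)\<close> stands for \<open>w ^ (- l * r)\<close>.\<close>

lemma roots_of_unity_filter:
  fixes p :: "'a::idom poly"
  assumes w: "primitive_root_unity s w" and "degree p < N" and "r < s"
  shows "(\<Sum>l=1..s. (w ^ l) ^ (s - r) * poly p (w ^ l))
    = of_nat s * (\<Sum>n | n < N \<and> n mod s = r. coeff p n)"
proof -
  have "w ^ s = 1"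
    using w by (simp add: primitive_root_unity_def)
  have power_eq_1_iff: "w ^ (n + (s - r)) = 1 \<longleftrightarrow> n mod s = r" for n
  proof -
    have "w ^ r * w ^ (s - r) = 1" and "w ^ (s - r) \<noteq> 0"
      using \<open>w ^ s = 1\<close> \<open>r < s\<close> primitive_root_unity_nonzero[OF w]
      by (auto simp flip: power_add)
    then have "w ^ (n + (s - r)) = 1 \<longleftrightarrow> w ^ n = w ^ r"
      by (metis mult_cancel_right power_add)
    then show ?thesis
      using \<open>r < s\<close> by (simp add: primitive_root_unity_power_eq_iff[OF w])
  qed
  have poly_p: "poly p x = (\<Sum>n<N. coeff p n * x ^ n)" for x
    unfolding poly_altdef using \<open>degree p < N\<close>
    by (intro sum.mono_neutral_left) (auto simp: coeff_eq_0)
  have "(w ^ l) ^ (s - r) * poly p (w ^ l) = (\<Sum>n<N. coeff p n * (w ^ (n + (s - r))) ^ l)" for l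
  proof -
    have "(w ^ (n + (s - r))) ^ l = (w ^ l) ^ (s - r) * (w ^ l) ^ n" for n
      by (metis power_add power_mult mult.commute)
    then show ?thesis
      by (simp add: poly_p sum_distrib_left mult.left_commute)
  qed
  then have "(\<Sum>l=1..s. (w ^ l) ^ (s - r) * poly p (w ^ l))
      = (\<Sum>l=1..s. \<Sum>n<N. coeff p n * (w ^ (n + (s - r))) ^ l)"
    by simp
  also have "\<dots> = (\<Sum>n<N. coeff p n * (\<Sum>l=1..s. (w ^ (n + (s - r))) ^ l))"
    by (subst sum.swap) (simp add: sum_distrib_left)
  also have "\<dots> = (\<Sum>n<N. if n mod s = r then of_nat s * coeff p n else 0)"
  proof (intro sum.cong refl)
    fix n
    have root: "(w ^ (n + (s - r))) ^ s = 1"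
      using \<open>w ^ s = 1\<close> by (metis power_mult mult.commute power_one)
    show "coeff p n * (\<Sum>l=1..s. (w ^ (n + (s - r))) ^ l)
        = (if n mod s = r then of_nat s * coeff p n else 0)"
      using sum_atLeast1_atMost_powers_root_unity[OF root] power_eq_1_iff[of n] by simp
  qed
  also have "\<dots> = of_nat s * (\<Sum>n | n < N \<and> n mod s = r. coeff p n)"
    by (simp add: sum.If_cases sum_distrib_left lessThan_def Collect_conj_eq)
  finally show ?thesis .
qed

lemma poly_qpoch_primitive_root_power:
  fixes w :: complex
  assumes w: "primitive_root_unity s w"
  shows "poly (qpoch (s - 1)) (w ^ l) = (if coprime l s then of_nat s else 0)"
proof -
  have s: "0 < s"
    using w by (simp add: primitive_root_unity_def)
  have poly_qpoch: "poly (qpoch (s - 1)) z = (\<Prod>i\<in>{1..<s}. 1 - z ^ i)" for z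
  proof -
    have "{1..s - 1} = {1..<s}"
      using s by auto
    then show ?thesis
      by (simp add: qpoch_def poly_prod poly_monom)
  qed
  show ?thesis
  proof (cases "coprime l s")
    case True
    have "poly (qpoch (s - 1)) (w ^ l) = (\<Prod>i\<in>{1..<s}. 1 - (w ^ l) ^ i)"
      by (rule poly_qpoch)
    also have "\<dots> = of_nat s"
      by (rule prod_one_minus_primitive_root_powers[OF primitive_root_unity_power[OF w True]])
    finally show ?thesis
      using True by simp
  next
    case False
    define g where "g = gcd l s"
    define d where "d = s div g"
    have "1 < g"
      using False s by (simp add: g_def coprime_iff_gcd_eq_1 nat_neq_iff)
    then have "d \<in> {1..<s}"
      using s by (auto simp: d_def g_def Suc_le_eq div_greater_zero_iff gcd_le2_nat)
    moreover have "s dvd l * d"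
      by (simp add: d_def g_def div_mult_swap flip: dvd_div_mult)
    then have "(w ^ l) ^ d = 1"
      using w by (simp add: primitive_root_unity_def flip: power_mult)
    ultimately have "(\<Prod>i\<in>{1..<s}. 1 - (w ^ l) ^ i) = 0"
      by (auto simp: prod_zero_iff)
    then show ?thesis
      using False poly_qpoch by simp
  qed
qed

lemma sum_residue_class_lessThan:
  fixes f :: "nat \<Rightarrow> 'a::comm_monoid_add"
  assumes "s dvd k" and "t < s"
  shows "(\<Sum>j=0..<k div s. f (j * s + t)) = (\<Sum>n | n < k \<and> n mod s = t. f n)"
proof (rule sum.reindex_bij_witness[of _ "\<lambda>n. n div s" "\<lambda>j. j * s + t"])
  fix j assume "j \<in> {0..<k div s}"
  then have "Suc j * s \<le> k div s * s"
    by (intro mult_le_mono1) simp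
  then show "j * s + t \<in> {n. n < k \<and> n mod s = t}"
    using assms by simp
  show "(j * s + t) div s = j"
    using \<open>t < s\<close> by simp
next
  fix n assume n: "n \<in> {n. n < k \<and> n mod s = t}"
  then show "n div s * s + t = n"
    using div_mult_mod_eq[of n s] by simp
  show "n div s \<in> {0..<k div s}"
    using n \<open>s dvd k\<close> less_mult_imp_div_less[of n "k div s" s] by simp
qed simp

lemma degree_one_minus_monom: "degree (1 - monom (1::'a::comm_ring_1) k) = k"
proof (cases "k = 0")
  case False
  have "1 - monom (1::'a) k = - monom 1 k + 1"
    by simp
  also have "degree \<dots> = k"
    using False by (subst degree_add_eq_left) (auto simp: degree_monom_eq)
  finally show ?thesis .
qed simp

lemma ramanujan_sum_of_nat:
  "ramanujan_sum s (int u)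
    = (\<Sum>h | 1 \<le> h \<and> h \<le> s \<and> coprime h s. exp (2 * of_real pi * \<i> / of_nat s) ^ (h * u))"
  unfolding ramanujan_sum_def
  by (intro sum.cong refl) (simp flip: exp_of_nat_mult add: field_simps)

lemma sum_sigma0_residue_class:
  fixes w :: complex
  assumes w: "primitive_root_unity s w" and "0 < k" and "s dvd k" and "u < s"
  shows "(\<Sum>j=0..<k div s. sigma0 k (j * s + u) s)
    = (\<Sum>l | 1 \<le> l \<and> l \<le> s \<and> coprime l s. (w ^ l) ^ (s - u))"
proof -
  define R where "R = qpoch (s - 1) mod (1 - monom 1 k)"
  have "1 - monom 1 k \<noteq> (0 :: complex poly)"
    using degree_one_minus_monom[of k] \<open>0 < k\<close> by (metis degree_0 less_irrefl)
  then have "degree R < k"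
    using degree_mod_less[of "1 - monom 1 k" "qpoch (s - 1)"] \<open>0 < k\<close>
    by (auto simp: R_def degree_one_minus_monom)
  have poly_R: "poly R (w ^ l) = (if coprime l s then of_nat s else 0)" for l
  proof -
    have "(w ^ l) ^ k = 1"
      using w \<open>s dvd k\<close> by (auto simp: primitive_root_unity_def simp flip: power_mult)
    then have "poly R (w ^ l) = poly (qpoch (s - 1)) (w ^ l)"
      unfolding R_def by (intro poly_mod) (simp add: poly_monom)
    then show ?thesis
      by (simp only: poly_qpoch_primitive_root_power[OF w])
  qed
  have "of_nat s * (\<Sum>j=0..<k div s. sigma0 k (j * s + u) s)
      = of_nat s * (\<Sum>n | n < k \<and> n mod s = u. coeff R n)"
    using assms by (simp add: sigma0_def R_def sum_residue_class_lessThan)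
  also have "\<dots> = (\<Sum>l=1..s. (w ^ l) ^ (s - u) * poly R (w ^ l))"
    by (rule roots_of_unity_filter[OF w \<open>degree R < k\<close> \<open>u < s\<close>, symmetric])
  also have "\<dots> = (\<Sum>l\<in>{1..s}. if coprime l s then of_nat s * (w ^ l) ^ (s - u) else 0)"
    by (intro sum.cong refl) (simp add: poly_R)
  also have "\<dots> = of_nat s * (\<Sum>l\<in>{l \<in> {1..s}. coprime l s}. (w ^ l) ^ (s - u))"
    unfolding sum_distrib_left by (rule sum.inter_filter[symmetric]) simp
  also have "{l \<in> {1..s}. coprime l s} = {l. 1 \<le> l \<and> l \<le> s \<and> coprime l s}"
    by auto
  finally show ?thesis
    using \<open>u < s\<close> by simp
qed

theorem proposition2p16:
  fixes k s :: nat and t :: int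
  assumes "0 < k" and "0 < s" and "s dvd k"
    and "0 \<le> t" and "t \<le> int s - 1"
  shows "ramanujan_sum s t = (\<Sum>j=0..<k div s. sigma0 k (j * s + nat t) s)"
proof -
  define u where "u = nat t"
  have t: "t = int u" and "u < s"
    using assms by (auto simp: u_def)
  define \<zeta> where "\<zeta> = exp (2 * of_real pi * \<i> / of_nat s)"
  have \<zeta>: "primitive_root_unity s \<zeta>"
    using \<open>0 < s\<close> by (simp add: \<zeta>_def primitive_root_unity_exp)
  have conjugate_twist: "(inverse \<zeta> ^ l) ^ (s - u) = \<zeta> ^ (l * u)" for l
    using \<zeta> \<open>u < s\<close> inverse_power_diff_root_unity[of "\<zeta> ^ l" s u]
    by (simp add: primitive_root_unity_def power_inverse flip: power_mult)
  have "ramanujan_sum s t = (\<Sum>l | 1 \<le> l \<and> l \<le> s \<and> coprime l s. \<zeta> ^ (l * u))"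
    unfolding t \<zeta>_def by (rule ramanujan_sum_of_nat)
  also have "\<dots> = (\<Sum>l | 1 \<le> l \<and> l \<le> s \<and> coprime l s. (inverse \<zeta> ^ l) ^ (s - u))"
    by (simp only: conjugate_twist)
  also have "\<dots> = (\<Sum>j=0..<k div s. sigma0 k (j * s + nat t) s)"
    unfolding u_def[symmetric] using assms \<open>u < s\<close>
    by (intro sum_sigma0_residue_class[symmetric] primitive_root_unity_inverse \<zeta>)
  finally show ?thesis .
qed

end
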